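(* Let $X$ be a rearrangement invariant sequence space such that the discrete Cesàro operator $C$ is bounded on $X$. Then $(CX)_a=C(X_a)$.
   Context: A rearrangement invariant sequence space is a Banach space $X$ of real sequences with the ideal property ($|x|\le|y|$ coordinatewise, $y\in X$ imply $x\in X$, $\|x\|_X\le\|y\|_X$), containing a sequence with all coordinates nonzero, with equal norms for equimeasurable sequences. $C(x)_n=\frac1n\sum_{k=1}^nx_k$. $CX=\{x:C(|x|)\in X\}$ with $\|x\|_{CX}=\|C(|x|)\|_X$, and $C(X_a)=\{x: C(|x|)\in X_a\}$. For a Banach ideal space $Y$, $Y_a$ denotes the ideal of order continuous elements: $y\in Y_a$ iff $0\le y^{(n)}\le|y|$, $y^{(n)}\downarrow0$ coordinatewise imply $\|y^{(n)}\|_Y\to0$. *)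

theory Defs
  imports "HOL-Analysis.Analysis" "HOL-Library.Extended_Nat"
begin

text \<open>Sequences are functions nat \<Rightarrow> real (index 0 corresponds to the paper's index 1).
A sequence space is a pair of a carrier set and a norm function on it.\<close>

definition cesaro :: "(nat \<Rightarrow> real) \<Rightarrow> nat \<Rightarrow> real" where
  "cesaro x n = (\<Sum>k\<le>n. x k) / real (Suc n)"

definition absseq :: "(nat \<Rightarrow> real) \<Rightarrow> nat \<Rightarrow> real" where
  "absseq x = (\<lambda>k. \<bar>x k\<bar>)"

definition banach_ideal_space :: "(nat \<Rightarrow> real) set \<Rightarrow> ((nat \<Rightarrow> real) \<Rightarrow> real) \<Rightarrow> bool" where
  "banach_ideal_space X N \<longleftrightarrow>
     (\<lambda>_. 0) \<in> X \<and>
     (\<forall>x\<in>X. \<forall>y\<in>X. (\<lambda>k. x k + y k) \<in> X) \<and>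
     (\<forall>x\<in>X. \<forall>c::real. (\<lambda>k. c * x k) \<in> X) \<and>
     (\<forall>x\<in>X. N x \<ge> 0 \<and> (N x = 0 \<longleftrightarrow> x = (\<lambda>_. 0))) \<and>
     (\<forall>x\<in>X. \<forall>c::real. N (\<lambda>k. c * x k) = \<bar>c\<bar> * N x) \<and>
     (\<forall>x\<in>X. \<forall>y\<in>X. N (\<lambda>k. x k + y k) \<le> N x + N y) \<and>
     (\<forall>u :: nat \<Rightarrow> nat \<Rightarrow> real. (\<forall>n. u n \<in> X) \<longrightarrow>
        (\<forall>e>0. \<exists>M. \<forall>m\<ge>M. \<forall>n\<ge>M. N (\<lambda>k. u m k - u n k) < e) \<longrightarrow>
        (\<exists>x\<in>X. (\<lambda>n. N (\<lambda>k. u n k - x k)) \<longlonglongrightarrow> 0)) \<and>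
     (\<forall>x y. y \<in> X \<longrightarrow> (\<forall>k. \<bar>x k\<bar> \<le> \<bar>y k\<bar>) \<longrightarrow> x \<in> X \<and> N x \<le> N y)"

definition distrib :: "(nat \<Rightarrow> real) \<Rightarrow> real \<Rightarrow> enat" where
  "distrib x t = (if finite {k. \<bar>x k\<bar> > t} then enat (card {k. \<bar>x k\<bar> > t}) else \<infinity>)"

definition equimeasurable :: "(nat \<Rightarrow> real) \<Rightarrow> (nat \<Rightarrow> real) \<Rightarrow> bool" where
  "equimeasurable x y \<longleftrightarrow> (\<forall>t>0. distrib x t = distrib y t)"

definition ri_sequence_space :: "(nat \<Rightarrow> real) set \<Rightarrow> ((nat \<Rightarrow> real) \<Rightarrow> real) \<Rightarrow> bool" where
  "ri_sequence_space X N \<longleftrightarrow>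
     banach_ideal_space X N \<and>
     (\<exists>x\<in>X. \<forall>k. x k \<noteq> 0) \<and>
     (\<forall>x y. x \<in> X \<longrightarrow> equimeasurable x y \<longrightarrow> y \<in> X \<and> N y = N x)"

definition cesaro_bounded :: "(nat \<Rightarrow> real) set \<Rightarrow> ((nat \<Rightarrow> real) \<Rightarrow> real) \<Rightarrow> bool" where
  "cesaro_bounded X N \<longleftrightarrow> (\<exists>M. \<forall>x\<in>X. cesaro x \<in> X \<and> N (cesaro x) \<le> M * N x)"

definition ces_space :: "(nat \<Rightarrow> real) set \<Rightarrow> (nat \<Rightarrow> real) set" where
  "ces_space X = {x. cesaro (absseq x) \<in> X}"

definition ces_norm :: "((nat \<Rightarrow> real) \<Rightarrow> real) \<Rightarrow> (nat \<Rightarrow> real) \<Rightarrow> real" where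
  "ces_norm N x = N (cesaro (absseq x))"

definition ord_cont :: "(nat \<Rightarrow> real) set \<Rightarrow> ((nat \<Rightarrow> real) \<Rightarrow> real) \<Rightarrow> (nat \<Rightarrow> real) set" where
  "ord_cont Y NY = {y \<in> Y. \<forall>u :: nat \<Rightarrow> nat \<Rightarrow> real.
      (\<forall>n k. 0 \<le> u n k \<and> u n k \<le> \<bar>y k\<bar>) \<longrightarrow>
      (\<forall>k. antimono (\<lambda>n. u n k) \<and> (\<lambda>n. u n k) \<longlonglongrightarrow> 0) \<longrightarrow>
      (\<lambda>n. NY (u n)) \<longlonglongrightarrow> 0}"

end

theory Submission
  imports Defs
begin

text \<open>
  The inclusion \<open>C(X\<^sub>a) \<subseteq> (CX)\<^sub>a\<close> holds in any ideal space, since \<open>C\<close> is positive and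
  preserves pointwise decreasing convergence to \<open>0\<close>.

  For the converse let \<open>x \<in> (CX)\<^sub>a\<close>, \<open>y = |x|\<close>, \<open>h = C(1, 0, 0, \<dots>) = (1/(k+1))\<^sub>k\<^sub>\<ge>\<^sub>0\<close>, and let \<open>T\<^sub>m z\<close> be
  \<open>z\<close> with its first \<open>m\<close> coordinates replaced by \<open>0\<close>. On the coordinates \<open>k \<ge> m\<close> we have
  \<open>Cy = (\<Sum>\<^sub>j\<^sub><\<^sub>m y\<^sub>j) h + C(T\<^sub>m y)\<close>, and \<open>\<parallel>C(T\<^sub>m y)\<parallel> \<rightarrow> 0\<close> because \<open>x \<in> (CX)\<^sub>a\<close>. Applying
  the bounded operator \<open>C\<close> to \<open>h - T\<^sub>K h\<close> gives \<open>H\<^sub>K \<parallel>T\<^sub>K h\<parallel> \<le> \<parallel>C\<parallel> \<parallel>h\<parallel>\<close>, with \<open>H\<^sub>K\<close> the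
  harmonic numbers, so \<open>\<parallel>T\<^sub>K h\<parallel> \<rightarrow> 0\<close>. Hence for \<open>m \<le> K\<close> every \<open>0 \<le> v\<^sub>n \<le> Cy\<close> with
  \<open>v\<^sub>n \<down> 0\<close> satisfies \<open>v\<^sub>n \<le> K (\<Sum>\<^sub>j\<^sub><\<^sub>K v\<^sub>n\<^sub>,\<^sub>j) h + (\<Sum>\<^sub>j\<^sub><\<^sub>m y\<^sub>j) T\<^sub>K h + C(T\<^sub>m y)\<close>, whose first
  coefficient tends to \<open>0\<close> as \<open>n \<rightarrow> \<infinity>\<close>; choosing \<open>m\<close>, then \<open>K\<close>, then \<open>n\<close> makes
  \<open>\<parallel>v\<^sub>n\<parallel>\<close> small.
\<close>

definition seq_tail :: "nat \<Rightarrow> (nat \<Rightarrow> real) \<Rightarrow> nat \<Rightarrow> real" where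
  "seq_tail m x k = (if m \<le> k then x k else 0)"

definition harmonic_seq :: "nat \<Rightarrow> real" where
  "harmonic_seq k = 1 / real (Suc k)"

lemma tendsto_zero_three_term_bound:
  fixes f :: "nat \<Rightarrow> real"
  assumes bound: "\<And>n m K. m \<le> K \<Longrightarrow> f n \<le> a K n + b m K + c m"
    and nonneg: "\<And>n. 0 \<le> f n"
    and a: "\<And>K. a K \<longlonglongrightarrow> 0" and b: "\<And>m. b m \<longlonglongrightarrow> 0" and c: "c \<longlonglongrightarrow> 0"
  shows "f \<longlonglongrightarrow> 0"
proof (rule order_tendstoI)
  fix r :: real
  assume "r < 0"
  then show "\<forall>\<^sub>F n in sequentially. r < f n"
    using nonneg by (simp add: order_less_le_trans)
next
  fix r :: real
  assume "0 < r"
  then have "r / 3 > 0" by simp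
  obtain m where m: "c m < r / 3"
    using order_tendstoD(2)[OF c \<open>r / 3 > 0\<close>] by (auto simp: eventually_sequentially)
  obtain K0 where "\<forall>K\<ge>K0. b m K < r / 3"
    using order_tendstoD(2)[OF b \<open>r / 3 > 0\<close>, of m] unfolding eventually_sequentially by blast
  then have K: "m \<le> max m K0" "b m (max m K0) < r / 3"
    by simp_all
  show "\<forall>\<^sub>F n in sequentially. f n < r"
    using order_tendstoD(2)[OF a[of "max m K0"] \<open>r / 3 > 0\<close>]
  proof eventually_elim
    case (elim n)
    then show ?case using bound[OF K(1), of n] K(2) m by linarith
  qed
qed

lemma sum_atMost_split_tail:
  assumes "m \<le> Suc k"
  shows "(\<Sum>j\<le>k. y j) = (\<Sum>j<m. y j) + (\<Sum>j\<le>k. seq_tail m y j)"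
proof -
  have "(\<Sum>j\<le>k. y j) = (\<Sum>j\<le>k. (if j < m then y j else 0) + seq_tail m y j)"
    by (rule sum.cong) (auto simp: seq_tail_def)
  also have "\<dots> = (\<Sum>j\<le>k. if j < m then y j else 0) + (\<Sum>j\<le>k. seq_tail m y j)"
    by (rule sum.distrib)
  also have "(\<Sum>j\<le>k. if j < m then y j else 0) = (\<Sum>j<m. y j)"
    using assms by (intro sum.mono_neutral_cong_right) auto
  finally show ?thesis .
qed

lemma cesaro_nonneg: "(\<And>k. 0 \<le> x k) \<Longrightarrow> 0 \<le> cesaro x n"
  unfolding cesaro_def by (simp add: sum_nonneg)

lemma cesaro_mono: "(\<And>k. x k \<le> y k) \<Longrightarrow> cesaro x n \<le> cesaro y n"
  unfolding cesaro_def by (intro divide_right_mono sum_mono) auto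

lemma tendsto_cesaro:
  "(\<And>k. (\<lambda>i. u i k) \<longlonglongrightarrow> l k) \<Longrightarrow> (\<lambda>i. cesaro (u i) n) \<longlonglongrightarrow> cesaro l n"
  unfolding cesaro_def by (intro tendsto_divide tendsto_sum tendsto_const) auto

lemma absseq_nonneg: "(\<And>k. 0 \<le> x k) \<Longrightarrow> absseq x = x"
  unfolding absseq_def by (simp add: abs_of_nonneg)

lemma cesaro_first_unit_vector: "cesaro (\<lambda>k. if k = 0 then 1 else 0) = harmonic_seq"
  unfolding cesaro_def harmonic_seq_def by auto

lemma cesaro_split_tail:
  assumes "m \<le> Suc k"
  shows "cesaro y k = (\<Sum>j<m. y j) * harmonic_seq k + cesaro (seq_tail m y) k"
  unfolding cesaro_def harmonic_seq_def sum_atMost_split_tail[OF assms, of y]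
  by (simp add: add_divide_distrib)

lemma le_cesaro_three_term_bound:
  assumes v: "\<And>k. 0 \<le> v k" "\<And>k. v k \<le> cesaro y k" and y: "\<And>k. 0 \<le> y k"
    and "m \<le> K"
  shows "v k \<le> (\<Sum>j<K. v j) * real K * harmonic_seq k
    + (\<Sum>j<m. y j) * seq_tail K harmonic_seq k + cesaro (seq_tail m y) k"
proof -
  have nonneg: "0 \<le> (\<Sum>j<K. v j) * real K * harmonic_seq k"
    "0 \<le> (\<Sum>j<m. y j) * seq_tail K harmonic_seq k" "0 \<le> cesaro (seq_tail m y) k"
    using v y by (auto simp: sum_nonneg harmonic_seq_def seq_tail_def intro!: cesaro_nonneg)
  show ?thesis
  proof (cases "k < K")
    case True
    have "v k \<le> (\<Sum>j<K. v j) * 1"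
      using True v by (simp add: member_le_sum)
    also have "\<dots> \<le> (\<Sum>j<K. v j) * (real K * harmonic_seq k)"
      using True v by (intro mult_left_mono) (auto simp: harmonic_seq_def sum_nonneg)
    finally show ?thesis using nonneg by (simp add: mult.assoc)
  next
    case False
    then have "v k \<le> (\<Sum>j<m. y j) * seq_tail K harmonic_seq k + cesaro (seq_tail m y) k"
      using v(2)[of k] cesaro_split_tail[of m k y] \<open>m \<le> K\<close> by (simp add: seq_tail_def)
    then show ?thesis using nonneg by linarith
  qed
qed

lemma ord_contI:
  assumes "y \<in> Y"
    and "\<And>u. (\<And>n k. 0 \<le> u n k) \<Longrightarrow> (\<And>n k. u n k \<le> \<bar>y k\<bar>) \<Longrightarrow>
      (\<And>k. antimono (\<lambda>n. u n k)) \<Longrightarrow> (\<And>k. (\<lambda>n. u n k) \<longlonglongrightarrow> 0) \<Longrightarrow>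
      (\<lambda>n. NY (u n)) \<longlonglongrightarrow> 0"
  shows "y \<in> ord_cont Y NY"
  using assms by (auto simp: ord_cont_def)

lemma ord_contD:
  assumes "y \<in> ord_cont Y NY"
  shows "y \<in> Y"
    and "(\<And>n k. 0 \<le> u n k) \<Longrightarrow> (\<And>n k. u n k \<le> \<bar>y k\<bar>) \<Longrightarrow>
      (\<And>k. antimono (\<lambda>n. u n k)) \<Longrightarrow> (\<And>k. (\<lambda>n. u n k) \<longlonglongrightarrow> 0) \<Longrightarrow>
      (\<lambda>n. NY (u n)) \<longlonglongrightarrow> 0"
  using assms by (auto simp: ord_cont_def)

lemma cesaro_ord_cont_imp_ord_cont_ces_space:
  assumes "cesaro (absseq x) \<in> ord_cont Y NY"
  shows "x \<in> ord_cont (ces_space Y) (ces_norm NY)"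
proof (rule ord_contI)
  show "x \<in> ces_space Y"
    using ord_contD(1)[OF assms] by (simp add: ces_space_def)
  fix u :: "nat \<Rightarrow> nat \<Rightarrow> real"
  assume u_nonneg: "\<And>n k. 0 \<le> u n k" and u_le: "\<And>n k. u n k \<le> \<bar>x k\<bar>"
    and u_anti: "\<And>k. antimono (\<lambda>n. u n k)" and u_lim: "\<And>k. (\<lambda>n. u n k) \<longlonglongrightarrow> 0"
  have "(\<lambda>n. NY (cesaro (u n))) \<longlonglongrightarrow> 0"
  proof (rule ord_contD(2)[OF assms])
    show "0 \<le> cesaro (u n) k" for n k
      using u_nonneg by (rule cesaro_nonneg)
    show "cesaro (u n) k \<le> \<bar>cesaro (absseq x) k\<bar>" for n k
      using cesaro_mono[of "u n" "absseq x" k] u_le by (simp add: absseq_def)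
    show "antimono (\<lambda>n. cesaro (u n) k)" for k
      using antimonoD[OF u_anti] by (intro antimonoI cesaro_mono) blast
    show "(\<lambda>n. cesaro (u n) k) \<longlonglongrightarrow> 0" for k
      using tendsto_cesaro[of u "\<lambda>_. 0" k] u_lim by (simp add: cesaro_def)
  qed
  moreover have "absseq (u n) = u n" for n
    using u_nonneg by (rule absseq_nonneg)
  ultimately show "(\<lambda>n. ces_norm NY (u n)) \<longlonglongrightarrow> 0"
    by (simp add: ces_norm_def)
qed

lemma ord_cont_norm_tail_tendsto_0:
  assumes "x \<in> ord_cont Y NY"
  shows "(\<lambda>m. NY (seq_tail m (absseq x))) \<longlonglongrightarrow> 0"
proof (rule ord_contD(2)[OF assms])
  show "0 \<le> seq_tail m (absseq x) k" "seq_tail m (absseq x) k \<le> \<bar>x k\<bar>" for m k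
    by (simp_all add: seq_tail_def absseq_def)
  show "antimono (\<lambda>m. seq_tail m (absseq x) k)" for k
    by (rule antimonoI) (simp add: seq_tail_def absseq_def)
  show "(\<lambda>m. seq_tail m (absseq x) k) \<longlonglongrightarrow> 0" for k
  proof (rule tendsto_eventually)
    show "\<forall>\<^sub>F m in sequentially. seq_tail m (absseq x) k = 0"
      using eventually_gt_at_top[of k] by eventually_elim (simp add: seq_tail_def)
  qed
qed

locale banach_ideal =
  fixes X :: "(nat \<Rightarrow> real) set" and N :: "(nat \<Rightarrow> real) \<Rightarrow> real"
  assumes banach_ideal_space: "banach_ideal_space X N"
begin

lemma mem_mono: "y \<in> X \<Longrightarrow> (\<And>k. \<bar>x k\<bar> \<le> \<bar>y k\<bar>) \<Longrightarrow> x \<in> X"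
  and norm_mono: "y \<in> X \<Longrightarrow> (\<And>k. \<bar>x k\<bar> \<le> \<bar>y k\<bar>) \<Longrightarrow> N x \<le> N y"
  using banach_ideal_space unfolding banach_ideal_space_def by blast+

lemma add_mem: "x \<in> X \<Longrightarrow> y \<in> X \<Longrightarrow> (\<lambda>k. x k + y k) \<in> X"
  and norm_add_le: "x \<in> X \<Longrightarrow> y \<in> X \<Longrightarrow> N (\<lambda>k. x k + y k) \<le> N x + N y"
  using banach_ideal_space unfolding banach_ideal_space_def by blast+

lemma scale_mem: "x \<in> X \<Longrightarrow> (\<lambda>k. c * x k) \<in> X"
  and norm_scale: "x \<in> X \<Longrightarrow> N (\<lambda>k. c * x k) = \<bar>c\<bar> * N x"
  using banach_ideal_space unfolding banach_ideal_space_def by blast+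

lemma norm_nonneg: "x \<in> X \<Longrightarrow> 0 \<le> N x"
  using banach_ideal_space unfolding banach_ideal_space_def by blast

lemma seq_tail_mem: "x \<in> X \<Longrightarrow> seq_tail m x \<in> X"
  by (erule mem_mono) (simp add: seq_tail_def)

lemma norm_le_lincomb:
  assumes "a \<in> X" "b \<in> X" "c \<in> X" "0 \<le> \<alpha>" "0 \<le> \<beta>"
    and "\<And>k. \<bar>v k\<bar> \<le> \<alpha> * a k + \<beta> * b k + c k"
  shows "N v \<le> \<alpha> * N a + \<beta> * N b + N c"
proof -
  have bc: "(\<lambda>k. \<beta> * b k + c k) \<in> X"
    by (rule add_mem[OF scale_mem[OF assms(2)] assms(3)])
  have w: "(\<lambda>k. \<alpha> * a k + (\<beta> * b k + c k)) \<in> X"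
    by (rule add_mem[OF scale_mem[OF assms(1)] bc])
  have "\<bar>v k\<bar> \<le> \<bar>\<alpha> * a k + (\<beta> * b k + c k)\<bar>" for k
    using assms(6)[of k] by linarith
  then have "N v \<le> N (\<lambda>k. \<alpha> * a k + (\<beta> * b k + c k))"
    by (rule norm_mono[OF w])
  also have "\<dots> \<le> N (\<lambda>k. \<alpha> * a k) + N (\<lambda>k. \<beta> * b k + c k)"
    by (rule norm_add_le[OF scale_mem[OF assms(1)] bc])
  also have "\<dots> \<le> \<alpha> * N a + (\<beta> * N b + N c)"
    using norm_add_le[OF scale_mem[OF assms(2), of \<beta>] assms(3)] norm_scale[OF assms(1)]
      norm_scale[OF assms(2)] assms(4,5)
    by simp
  finally show ?thesis
    by simp
qed

lemma cesaro_bounded_nonneg_const: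
  assumes "cesaro_bounded X N"
  obtains M where "0 \<le> M" "\<And>z. z \<in> X \<Longrightarrow> cesaro z \<in> X \<and> N (cesaro z) \<le> M * N z"
proof -
  obtain M where M: "\<forall>z\<in>X. cesaro z \<in> X \<and> N (cesaro z) \<le> M * N z"
    using assms unfolding cesaro_bounded_def by blast
  show ?thesis
  proof (rule that[of "max M 0"])
    fix z
    assume "z \<in> X"
    then have "N (cesaro z) \<le> M * N z"
      using M by blast
    also have "\<dots> \<le> max M 0 * N z"
      using \<open>z \<in> X\<close> by (intro mult_right_mono norm_nonneg) simp_all
    finally show "cesaro z \<in> X \<and> N (cesaro z) \<le> max M 0 * N z"
      using M \<open>z \<in> X\<close> by blast
  qed simp
qed

lemma harmonic_seq_mem:
  assumes "z \<in> X" "z 0 \<noteq> 0" "cesaro_bounded X N"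
  shows "harmonic_seq \<in> X"
proof -
  have "\<bar>if k = 0 then 1 else 0\<bar> \<le> \<bar>1 / \<bar>z 0\<bar> * z k\<bar>" for k :: nat
    using assms(2) by (simp add: abs_mult)
  then have "(\<lambda>k. if k = 0 then 1 else 0) \<in> X"
    by (rule mem_mono[OF scale_mem[OF assms(1)]])
  then show ?thesis
    using assms(3) unfolding cesaro_bounded_def cesaro_first_unit_vector[symmetric] by blast
qed

lemma harm_mult_norm_tail_harmonic_seq_le:
  assumes "0 \<le> M" "\<And>z. z \<in> X \<Longrightarrow> cesaro z \<in> X \<and> N (cesaro z) \<le> M * N z"
    and h: "harmonic_seq \<in> X"
  shows "harm K * N (seq_tail K harmonic_seq) \<le> M * N harmonic_seq"
proof -
  define g where "g k = (if k < K then harmonic_seq k else 0)" for k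
  have "\<bar>g k\<bar> \<le> \<bar>harmonic_seq k\<bar>" for k
    by (simp add: g_def)
  then have g: "g \<in> X" "N g \<le> N harmonic_seq"
    by (rule mem_mono[OF h], rule norm_mono[OF h])
  have Cg: "cesaro g \<in> X" "N (cesaro g) \<le> M * N g"
    using assms(2)[OF g(1)] by simp_all
  have "seq_tail K g = (\<lambda>_. 0)"
    by (simp add: seq_tail_def g_def fun_eq_iff)
  have "\<bar>harm K * seq_tail K harmonic_seq k\<bar> \<le> \<bar>cesaro g k\<bar>" for k
  proof (cases "K \<le> k")
    case True
    have "(\<Sum>j\<le>k. g j) = harm K"
      using sum_atMost_split_tail[of K k g] True \<open>seq_tail K g = (\<lambda>_. 0)\<close>
      by (simp add: g_def harm_altdef harmonic_seq_def divide_inverse)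
    then show ?thesis
      using True by (simp add: seq_tail_def cesaro_def harmonic_seq_def harm_nonneg)
  qed (simp add: seq_tail_def)
  then have "N (\<lambda>k. harm K * seq_tail K harmonic_seq k) \<le> N (cesaro g)"
    by (rule norm_mono[OF Cg(1)])
  also have "\<dots> \<le> M * N harmonic_seq"
    using Cg(2) mult_left_mono[OF g(2) assms(1)] by linarith
  finally show ?thesis
    using norm_scale[OF seq_tail_mem[OF h]] by (simp add: harm_nonneg)
qed

lemma norm_tail_harmonic_seq_tendsto_0:
  assumes "0 \<le> M" "\<And>z. z \<in> X \<Longrightarrow> cesaro z \<in> X \<and> N (cesaro z) \<le> M * N z"
    and "harmonic_seq \<in> X"
  shows "(\<lambda>K. N (seq_tail K harmonic_seq)) \<longlonglongrightarrow> 0"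
proof (rule tendsto_sandwich)
  show "\<forall>\<^sub>F K in sequentially. 0 \<le> N (seq_tail K harmonic_seq)"
    using assms(3) by (simp add: norm_nonneg seq_tail_mem)
  show "\<forall>\<^sub>F K in sequentially. N (seq_tail K harmonic_seq) \<le> M * N harmonic_seq / harm K"
    using eventually_gt_at_top[of "0::nat"]
  proof eventually_elim
    case (elim K)
    then show ?case
      using harm_mult_norm_tail_harmonic_seq_le[OF assms, of K]
      by (simp add: pos_le_divide_eq mult.commute)
  qed
  show "(\<lambda>K. M * N harmonic_seq / harm K) \<longlonglongrightarrow> 0"
    by (rule tendsto_divide_0[OF tendsto_const filterlim_at_top_imp_at_infinity[OF harm_at_top]])
qed simp

end

context banach_ideal
begin

lemma ord_cont_ces_space_imp_cesaro_ord_cont: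
  assumes h: "harmonic_seq \<in> X" and h_tail: "(\<lambda>K. N (seq_tail K harmonic_seq)) \<longlonglongrightarrow> 0"
    and x: "x \<in> ord_cont (ces_space X) (ces_norm N)"
  shows "cesaro (absseq x) \<in> ord_cont X N"
proof -
  define y where "y = absseq x"
  have y_nonneg: "0 \<le> y k" for k
    by (simp add: y_def absseq_def)
  have Cy: "cesaro y \<in> X"
    using ord_contD(1)[OF x] by (simp add: ces_space_def y_def)
  have "0 \<le> cesaro (seq_tail m y) k" "cesaro (seq_tail m y) k \<le> cesaro y k" for m k
    using y_nonneg by (auto intro!: cesaro_nonneg cesaro_mono simp: seq_tail_def)
  then have "\<bar>cesaro (seq_tail m y) k\<bar> \<le> \<bar>cesaro y k\<bar>" for m k
    by (metis abs_of_nonneg order_trans)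
  then have tail_mem: "cesaro (seq_tail m y) \<in> X" for m
    by (rule mem_mono[OF Cy])
  have "absseq (seq_tail m y) = seq_tail m y" for m
    by (rule absseq_nonneg) (simp add: seq_tail_def y_nonneg)
  then have tail_lim: "(\<lambda>m. N (cesaro (seq_tail m y))) \<longlonglongrightarrow> 0"
    using ord_cont_norm_tail_tendsto_0[OF x] by (simp add: ces_norm_def y_def)
  show ?thesis
    unfolding y_def[symmetric]
  proof (rule ord_contI[OF Cy])
    fix v :: "nat \<Rightarrow> nat \<Rightarrow> real"
    assume v_nonneg: "\<And>n k. 0 \<le> v n k" and v_le_abs: "\<And>n k. v n k \<le> \<bar>cesaro y k\<bar>"
      and v_lim: "\<And>k. (\<lambda>n. v n k) \<longlonglongrightarrow> 0"
    have v_le: "v n k \<le> cesaro y k" for n k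
      using v_le_abs[of n k] cesaro_nonneg[of y k, OF y_nonneg] by simp
    show "(\<lambda>n. N (v n)) \<longlonglongrightarrow> 0"
    proof (rule tendsto_zero_three_term_bound)
      fix n m K :: nat
      have "0 \<le> (\<Sum>j<K. v n j) * real K" "0 \<le> (\<Sum>j<m. y j)"
        using v_nonneg y_nonneg by (simp_all add: sum_nonneg)
      moreover assume "m \<le> K"
      then have "\<bar>v n k\<bar> \<le> (\<Sum>j<K. v n j) * real K * harmonic_seq k
        + (\<Sum>j<m. y j) * seq_tail K harmonic_seq k + cesaro (seq_tail m y) k" for k
        using le_cesaro_three_term_bound[of "v n" y m K k] v_nonneg v_le y_nonneg by simp
      ultimately show "N (v n) \<le> (\<Sum>j<K. v n j) * real K * N harmonic_seq
        + (\<Sum>j<m. y j) * N (seq_tail K harmonic_seq) + N (cesaro (seq_tail m y))"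
        by (rule norm_le_lincomb[OF h seq_tail_mem[OF h] tail_mem])
    next
      show "0 \<le> N (v n)" for n
        using v_nonneg v_le_abs by (intro norm_nonneg mem_mono[OF Cy]) simp
    next
      fix K
      have "(\<lambda>n. \<Sum>j<K. v n j) \<longlonglongrightarrow> 0"
        using v_lim by (rule tendsto_null_sum)
      then show "(\<lambda>n. (\<Sum>j<K. v n j) * real K * N harmonic_seq) \<longlonglongrightarrow> 0"
        by (intro tendsto_mult_left_zero)
    next
      show "(\<lambda>K. (\<Sum>j<m. y j) * N (seq_tail K harmonic_seq)) \<longlonglongrightarrow> 0" for m
        using tendsto_mult_right_zero[OF h_tail] .
    qed (rule tail_lim)
  qed
qed

end

theorem proposition5p1:
  fixes X :: "(nat \<Rightarrow> real) set" and N :: "(nat \<Rightarrow> real) \<Rightarrow> real"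
  assumes "ri_sequence_space X N"
    and "cesaro_bounded X N"
  shows "ord_cont (ces_space X) (ces_norm N) = {x. cesaro (absseq x) \<in> ord_cont X N}"
proof -
  interpret banach_ideal X N
    using assms(1) by unfold_locales (simp add: ri_sequence_space_def)
  obtain z where z: "z \<in> X" "\<forall>k. z k \<noteq> 0"
    using assms(1) unfolding ri_sequence_space_def by blast
  obtain M where "0 \<le> M" "\<And>z. z \<in> X \<Longrightarrow> cesaro z \<in> X \<and> N (cesaro z) \<le> M * N z"
    using cesaro_bounded_nonneg_const[OF assms(2)] by blast
  moreover have h: "harmonic_seq \<in> X"
    using harmonic_seq_mem[OF z(1) _ assms(2)] z(2) by blast
  ultimately have "(\<lambda>K. N (seq_tail K harmonic_seq)) \<longlonglongrightarrow> 0"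
    by (rule norm_tail_harmonic_seq_tendsto_0)
  with h show ?thesis
    by (auto intro: ord_cont_ces_space_imp_cesaro_ord_cont cesaro_ord_cont_imp_ord_cont_ces_space)
qed

end
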